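(* Let $Y\in\mathbb{R}^{M\times I}$ and $X\in\mathbb{R}^{N\times I}$ be nonnegative output and input data of $I$ DMUs, fix a DMU $\hat\imath$, an output index $m$, and $\sigma\ge0$, and let $\theta^{\hat\imath}$ be the nominal efficiency score of DMU $\hat\imath$. Let $\bar Y$ equal $Y$ except that the single entry $Y_{m\hat\imath}$ is replaced by $Y_{m\hat\imath}+\Delta_{m\hat\imath}$ (assumed nonnegative), and let $\gamma$ be the efficiency score of DMU $\hat\imath$ computed from $(\bar Y,X)$. If $\Delta_{m\hat\imath}=\sigma$ then $\gamma\ge\theta^{\hat\imath}$; if $\Delta_{m\hat\imath}=-\sigma$ then $\gamma\le\theta^{\hat\imath}$.
   Context: Input-oriented BCC DEA: the efficiency score of DMU $k$ with data $(X,Y)$ is $\min\{\theta: Y\lambda\ge y^k,\ X\lambda\le\theta x^k,\ e^T\lambda=1,\ \lambda\ge0\}$, where $y^k,x^k$ are the $k$-th columns and $e$ is the all-ones vector; the perturbed entry appears both in the $\hat\imath$-th column of $\bar Y$ and in the right-hand side $\bar y^{\hat\imath}$. *)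

theory Defs
  imports Complex_Main
begin

text \<open>Data: Y is an M x I output matrix, X an N x I input matrix, represented as
  functions on indices (row, column) with explicit bounds.
  Input-oriented BCC efficiency score of DMU k:
  min { theta : Y lambda >= y^k, X lambda <= theta x^k, e^T lambda = 1, lambda >= 0 }.\<close>

definition bcc_feasible ::
  "nat \<Rightarrow> nat \<Rightarrow> nat \<Rightarrow> (nat \<Rightarrow> nat \<Rightarrow> real) \<Rightarrow> (nat \<Rightarrow> nat \<Rightarrow> real) \<Rightarrow> nat \<Rightarrow> real set" where
  "bcc_feasible M N I Y X k =
     {\<theta>. \<exists>lam::nat \<Rightarrow> real.
        (\<forall>i<I. 0 \<le> lam i) \<and> (\<Sum>i<I. lam i) = 1 \<and>
        (\<forall>m<M. (\<Sum>i<I. Y m i * lam i) \<ge> Y m k) \<and>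
        (\<forall>n<N. (\<Sum>i<I. X n i * lam i) \<le> \<theta> * X n k)}"

definition bcc_score ::
  "nat \<Rightarrow> nat \<Rightarrow> nat \<Rightarrow> (nat \<Rightarrow> nat \<Rightarrow> real) \<Rightarrow> (nat \<Rightarrow> nat \<Rightarrow> real) \<Rightarrow> nat \<Rightarrow> real" where
  "bcc_score M N I Y X k = Inf (bcc_feasible M N I Y X k)"

definition perturb_entry ::
  "(nat \<Rightarrow> nat \<Rightarrow> real) \<Rightarrow> nat \<Rightarrow> nat \<Rightarrow> real \<Rightarrow> (nat \<Rightarrow> nat \<Rightarrow> real)" where
  "perturb_entry Y m k d = (\<lambda>r c. if r = m \<and> c = k then Y r c + d else Y r c)"

end

theory Submission
  imports Defs
begin

text \<open>Raising the single output entry Y m k by e \<ge> 0 turns the m-th output constraint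
  of DMU k into \<open>\<Sum>i. Y m i \<lambda>\<^sub>i \<ge> Y m k + e (1 - \<lambda>\<^sub>k)\<close>, which is stronger than the
  original one because \<open>\<lambda>\<^sub>k \<le> 1\<close>. So the feasible set of the LP shrinks and its infimum,
  the efficiency score, can only grow. Lowering the entry is undone by raising it again,
  which gives the reverse inequality.\<close>

lemma unit_weight_in_bcc_feasible:
  assumes "k < I" and "\<forall>n<N. X n k \<le> \<theta> * X n k"
  shows "\<theta> \<in> bcc_feasible M N I Y X k"
proof -
  have unit: "(\<Sum>i<I. f i * (if i = k then 1 else 0)) = (f k :: real)" for f
    using assms(1) by (simp add: if_distrib sum.delta' cong: if_cong)
  show ?thesis
    unfolding bcc_feasible_def
    by (rule CollectI, rule exI[of _ "\<lambda>i. if i = k then 1 else 0"]) (use assms in \<open>simp add: unit\<close>)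
qed

lemma bcc_feasible_nonneg:
  assumes Xnn: "\<forall>n<N. \<forall>i<I. 0 \<le> X n i" and n: "n < N" "0 < X n k"
    and \<theta>: "\<theta> \<in> bcc_feasible M N I Y X k"
  shows "0 \<le> \<theta>"
proof -
  obtain lam where lam: "\<forall>i<I. 0 \<le> lam i" "(\<Sum>i<I. X n i * lam i) \<le> \<theta> * X n k"
    using \<theta> n(1) unfolding bcc_feasible_def by blast
  have "0 \<le> (\<Sum>i<I. X n i * lam i)"
    using lam(1) Xnn n(1) by (intro sum_nonneg) simp
  then have "0 \<le> \<theta> * X n k"
    using lam(2) by linarith
  then show ?thesis
    using n(2) by (simp add: zero_le_mult_iff)
qed

lemma bcc_score_antimono:
  assumes sub: "bcc_feasible M N I Y X k \<subseteq> bcc_feasible M N I Y' X k"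
    and k: "k < I" and Xnn: "\<forall>n<N. \<forall>i<I. 0 \<le> X n i"
  shows "bcc_score M N I Y' X k \<le> bcc_score M N I Y X k"
proof (cases "\<exists>n<N. 0 < X n k")
  case True
  then obtain n where "n < N" "0 < X n k"
    by blast
  then have "bdd_below (bcc_feasible M N I Y' X k)"
    using bcc_feasible_nonneg[OF Xnn] by (intro bdd_belowI[of _ 0]) blast
  moreover have "1 \<in> bcc_feasible M N I Y X k"
    using k by (intro unit_weight_in_bcc_feasible) auto
  ultimately show ?thesis
    unfolding bcc_score_def using sub by (intro cInf_superset_mono) auto
next
  case False
  \<comment> \<open>DMU k uses no input, so every \<open>\<theta>\<close> is feasible for both Y and Y'.\<close>
  then have "\<forall>n<N. X n k = 0"
    using Xnn k by force
  then have "bcc_feasible M N I Z X k = UNIV" for Z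
    using k by (auto intro: unit_weight_in_bcc_feasible)
  then show ?thesis
    unfolding bcc_score_def by simp
qed

lemma weight_le_one:
  assumes "\<forall>i<I. 0 \<le> lam i" "(\<Sum>i<I. lam i) = (1::real)" "k < (I::nat)"
  shows "lam k \<le> 1"
proof -
  have "lam k \<le> (\<Sum>i<I. lam i)"
    using assms by (intro member_le_sum) (auto simp del: sum_nonneg)
  then show ?thesis
    using assms(2) by simp
qed

lemma sum_perturb_entry:
  assumes "k < I"
  shows "(\<Sum>i<I. perturb_entry Y m k d r i * lam i) =
           (\<Sum>i<I. Y r i * lam i) + (if r = m then d * lam k else 0)"
proof -
  have "(\<Sum>i<I. perturb_entry Y m k d r i * lam i) =
          (\<Sum>i<I. Y r i * lam i + (if r = m \<and> i = k then d * lam i else 0))"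
    unfolding perturb_entry_def by (intro sum.cong) (auto simp: algebra_simps)
  also have "\<dots> = (\<Sum>i<I. Y r i * lam i) + (if r = m then d * lam k else 0)"
    using assms by (simp add: sum.distrib)
  finally show ?thesis .
qed

lemma perturb_entry_cancel: "perturb_entry (perturb_entry Y m k (- d)) m k d = Y"
  unfolding perturb_entry_def by (intro ext) auto

lemma bcc_feasible_perturb_entry_subset:
  assumes k: "k < I" and e: "0 \<le> e"
  shows "bcc_feasible M N I (perturb_entry Y m k e) X k \<subseteq> bcc_feasible M N I Y X k"
proof
  fix \<theta> assume "\<theta> \<in> bcc_feasible M N I (perturb_entry Y m k e) X k"
  then obtain lam where lam: "\<forall>i<I. 0 \<le> lam i" "(\<Sum>i<I. lam i) = 1"
      "\<forall>r<M. perturb_entry Y m k e r k \<le> (\<Sum>i<I. perturb_entry Y m k e r i * lam i)"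
      "\<forall>n<N. (\<Sum>i<I. X n i * lam i) \<le> \<theta> * X n k"
    unfolding bcc_feasible_def by blast
  have "e * lam k \<le> e"
    using weight_le_one[OF lam(1,2) k] e by (simp add: mult_left_le)
  have "Y r k \<le> (\<Sum>i<I. Y r i * lam i)" if r: "r < M" for r
  proof -
    have "perturb_entry Y m k e r k \<le> (\<Sum>i<I. perturb_entry Y m k e r i * lam i)"
      using lam(3) r by blast
    also have "\<dots> = (\<Sum>i<I. Y r i * lam i) + (if r = m then e * lam k else 0)"
      by (rule sum_perturb_entry[OF k])
    finally show ?thesis
      using \<open>e * lam k \<le> e\<close> by (simp add: perturb_entry_def split: if_splits)
  qed
  then show "\<theta> \<in> bcc_feasible M N I Y X k"
    using lam unfolding bcc_feasible_def by blast
qed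

theorem lemma5:
  fixes M N I :: nat and Y X :: "nat \<Rightarrow> nat \<Rightarrow> real"
    and k m :: nat and \<sigma> \<Delta> :: real
  assumes Ynn: "\<forall>r<M. \<forall>i<I. 0 \<le> Y r i"
    and Xnn: "\<forall>n<N. \<forall>i<I. 0 \<le> X n i"
    and k: "k < I" and m: "m < M"
    and sigma: "0 \<le> \<sigma>"
    and pert_nn: "0 \<le> Y m k + \<Delta>"
  shows "(\<Delta> = \<sigma> \<longrightarrow> bcc_score M N I (perturb_entry Y m k \<Delta>) X k \<ge> bcc_score M N I Y X k)
       \<and> (\<Delta> = - \<sigma> \<longrightarrow> bcc_score M N I (perturb_entry Y m k \<Delta>) X k \<le> bcc_score M N I Y X k)"
proof (intro conjI impI)
  assume "\<Delta> = \<sigma>"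
  then show "bcc_score M N I Y X k \<le> bcc_score M N I (perturb_entry Y m k \<Delta>) X k"
    using bcc_score_antimono[OF bcc_feasible_perturb_entry_subset[OF k sigma] k Xnn] by simp
next
  assume "\<Delta> = - \<sigma>"
  then have "bcc_feasible M N I Y X k \<subseteq> bcc_feasible M N I (perturb_entry Y m k \<Delta>) X k"
    using bcc_feasible_perturb_entry_subset[OF k sigma, of M N "perturb_entry Y m k \<Delta>" m X]
    by (simp add: perturb_entry_cancel)
  then show "bcc_score M N I (perturb_entry Y m k \<Delta>) X k \<le> bcc_score M N I Y X k"
    by (rule bcc_score_antimono[OF _ k Xnn])
qed

end
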